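(* Let $L$ be a positive definite lattice with $\operatorname{rank} L\geq 4$ and let $\mathcal{A}_{a,m}$ be an admissible arithmetic progression. If $\mathcal{A}_{a,m}\subseteq \mathcal{E}(L)$, then there is a prime $p\mid m$ such that $a\in\mathcal{E}(L_p)$, i.e. $a\notin Q(L_p)$.
   Context: A lattice is a finitely generated $\mathbb{Z}$-submodule $L$ of a finite-dimensional quadratic space $(V,Q)$ over $\mathbb{Q}$, with associated symmetric bilinear form $B$ satisfying $Q(v)=B(v,v)$; it is assumed throughout that the scale of $L$ (the fractional ideal generated by $\{B(x,y):x,y\in L\}$) equals $\mathbb{Z}$. $L$ is positive definite if $Q(v)>0$ for all nonzero $v\in L$. $\mathbb{N}$ is the set of positive integers, $Q(L)=\{Q(v):v\in L\}$ and $\mathcal{E}(L)=\mathbb{N}\setminus Q(L)$. For a prime $p$, $L_p=\mathbb{Z}_p\otimes L$, $Q(L_p)=\{Q(v):v\in L_p\}$ and $\mathcal{E}(L_p)=\mathbb{Z}_p\setminus Q(L_p)$. For positive integers $a<m$, $\mathcal{A}_{a,m}=\{a+mx : x\in\mathbb{N}\cup\{0\}\}$, and $\mathcal{A}_{a,m}$ is admissible if $\operatorname{ord}_p a<\operatorname{ord}_p m$ for every prime $p\mid m$. *)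

theory Defs
  imports "HOL-Computational_Algebra.Computational_Algebra"
begin

text \<open>A lattice L of rank n is given by its Gram matrix G (entries B(e_i,e_j)) with
  respect to a Z-basis e_0,...,e_(n-1); vectors of L are coordinate vectors x :: nat => int
  (only coordinates i < n matter).  Since the scale is assumed to be Z, all B-values are
  integers, so G is integral.\<close>

definition Bf :: "(nat \<Rightarrow> nat \<Rightarrow> 'a::comm_ring_1) \<Rightarrow> nat \<Rightarrow> (nat \<Rightarrow> 'a) \<Rightarrow> (nat \<Rightarrow> 'a) \<Rightarrow> 'a" where
  "Bf G n x y = (\<Sum>i<n. \<Sum>j<n. x i * G i j * y j)"

definition Qf :: "(nat \<Rightarrow> nat \<Rightarrow> 'a::comm_ring_1) \<Rightarrow> nat \<Rightarrow> (nat \<Rightarrow> 'a) \<Rightarrow> 'a" where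
  "Qf G n x = Bf G n x x"

definition symmetric_gram :: "(nat \<Rightarrow> nat \<Rightarrow> int) \<Rightarrow> nat \<Rightarrow> bool" where
  "symmetric_gram G n \<longleftrightarrow> (\<forall>i<n. \<forall>j<n. G i j = G j i)"

definition pos_def_lattice :: "(nat \<Rightarrow> nat \<Rightarrow> int) \<Rightarrow> nat \<Rightarrow> bool" where
  "pos_def_lattice G n \<longleftrightarrow> (\<forall>x::nat \<Rightarrow> int. (\<exists>i<n. x i \<noteq> 0) \<longrightarrow> Qf G n x > 0)"

definition lattice_scale :: "(nat \<Rightarrow> nat \<Rightarrow> int) \<Rightarrow> nat \<Rightarrow> int set" where
  "lattice_scale G n = {s. \<exists>k (c::nat \<Rightarrow> int) (x::nat \<Rightarrow> nat \<Rightarrow> int) y.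
      s = (\<Sum>t<k. c t * Bf G n (x t) (y t))}"

definition QL :: "(nat \<Rightarrow> nat \<Rightarrow> int) \<Rightarrow> nat \<Rightarrow> int set" where
  "QL G n = {Qf G n x | x. True}"

definition EL :: "(nat \<Rightarrow> nat \<Rightarrow> int) \<Rightarrow> nat \<Rightarrow> nat set" where
  "EL G n = {N. N > 0 \<and> int N \<notin> QL G n}"

text \<open>p-adic integers Z_p as the inverse limit of Z/p^k Z: coherent sequences of residues.
  Ring operations are componentwise modulo p^k; the integer a embeds as (a mod p^k)_k.\<close>
definition Zp :: "nat \<Rightarrow> (nat \<Rightarrow> int) set" where
  "Zp p = {f. \<forall>k. 0 \<le> f k \<and> f k < int p ^ k \<and> f (Suc k) mod int p ^ k = f k}"

text \<open>a \<in> Q(L_p): there is v \<in> (Z_p)^n (coordinates of a vector of L_p = Z_p \<otimes> L) with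
  Q(v) = a in Z_p, i.e. equality at every level p^k.\<close>
definition in_QLp :: "(nat \<Rightarrow> nat \<Rightarrow> int) \<Rightarrow> nat \<Rightarrow> nat \<Rightarrow> int \<Rightarrow> bool" where
  "in_QLp G n p a \<longleftrightarrow> (\<exists>v::nat \<Rightarrow> nat \<Rightarrow> int. (\<forall>i<n. v i \<in> Zp p) \<and>
      (\<forall>k. Qf G n (\<lambda>i. v i k) mod int p ^ k = a mod int p ^ k))"

definition AP :: "nat \<Rightarrow> nat \<Rightarrow> nat set" where
  "AP a m = {a + m * x | x. True}"

definition admissible :: "nat \<Rightarrow> nat \<Rightarrow> bool" where
  "admissible a m \<longleftrightarrow> 0 < a \<and> a < m \<and>
     (\<forall>p. prime p \<longrightarrow> p dvd m \<longrightarrow> multiplicity p a < multiplicity p m)"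

end

theory Submission
  imports Defs "HOL-Number_Theory.Number_Theory"
begin

text \<open>If a were represented by L_p for every prime p dividing m, then by the Chinese
  remainder theorem some vector v of L would satisfy Q(v) = a (mod m). Since Q is positive
  semidefinite on L and a < m, the integer Q(v) lies in the progression a + m N, so it is an
  element of A_{a,m} represented by L.\<close>

lemma Qf_cong:
  fixes G :: "nat \<Rightarrow> nat \<Rightarrow> int"
  assumes "\<And>i. i < n \<Longrightarrow> [v i = w i] (mod d)"
  shows "[Qf G n v = Qf G n w] (mod d)"
  unfolding Qf_def Bf_def
  by (intro cong_sum cong_mult assms cong_refl) auto

lemma Qf_cong_mult_coprime:
  fixes G :: "nat \<Rightarrow> nat \<Rightarrow> int" and d1 d2 a :: int
  assumes cop: "coprime d1 d2"
    and v1: "[Qf G n v1 = a] (mod d1)" and v2: "[Qf G n v2 = a] (mod d2)"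
  obtains v where "[Qf G n v = a] (mod d1 * d2)"
proof -
  have "\<forall>i. \<exists>x. [x = v1 i] (mod d1) \<and> [x = v2 i] (mod d2)"
    using binary_chinese_remainder_int[OF cop] by blast
  then obtain v where v: "\<And>i. [v i = v1 i] (mod d1) \<and> [v i = v2 i] (mod d2)"
    by metis
  have "[Qf G n v = a] (mod d1)"
    using Qf_cong[of n v v1 d1 G] v v1 cong_trans by blast
  moreover have "[Qf G n v = a] (mod d2)"
    using Qf_cong[of n v v2 d2 G] v v2 cong_trans by blast
  ultimately have "[Qf G n v = a] (mod d1 * d2)"
    using cop by (simp add: cong_iff_dvd_diff divides_mult)
  then show thesis by (rule that)
qed

lemma Qf_cong_prod_coprime:
  fixes G :: "nat \<Rightarrow> nat \<Rightarrow> int" and d :: "'i \<Rightarrow> int" and a :: int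
  assumes "finite I"
    and "pairwise (\<lambda>i j. coprime (d i) (d j)) I"
    and "\<And>i. i \<in> I \<Longrightarrow> \<exists>v. [Qf G n v = a] (mod d i)"
  shows "\<exists>v. [Qf G n v = a] (mod \<Prod>i\<in>I. d i)"
  using assms
proof (induction I rule: finite_induct)
  case empty
  then show ?case by simp
next
  case (insert i I)
  have pairwise_I: "pairwise (\<lambda>i j. coprime (d i) (d j)) I"
    using insert.prems(1) pairwise_subset by blast
  have "coprime (d i) (d j)" if "j \<in> I" for j
    using insert.hyps(2) insert.prems(1) that unfolding pairwise_def by force
  then have "coprime (d i) (\<Prod>j\<in>I. d j)"
    by (rule prod_coprime_right)
  moreover obtain v1 where "[Qf G n v1 = a] (mod d i)"
    using insert.prems(2) by blast
  moreover obtain v2 where "[Qf G n v2 = a] (mod \<Prod>j\<in>I. d j)"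
    using insert.IH[OF pairwise_I] insert.prems(2) by blast
  ultimately obtain v where "[Qf G n v = a] (mod d i * (\<Prod>j\<in>I. d j))"
    by (rule Qf_cong_mult_coprime)
  then show ?case
    using insert.hyps by auto
qed

lemma in_QLp_imp_cong_prime_power:
  assumes "in_QLp G n p a"
  shows "\<exists>v. [Qf G n v = a] (mod int p ^ k)"
  using assms unfolding in_QLp_def cong_def by blast

lemma in_QLp_imp_cong:
  fixes G :: "nat \<Rightarrow> nat \<Rightarrow> int" and m :: nat and a :: int
  assumes "m > 0"
    and "\<And>p. prime p \<Longrightarrow> p dvd m \<Longrightarrow> in_QLp G n p a"
  shows "\<exists>v. [Qf G n v = a] (mod int m)"
proof -
  let ?d = "\<lambda>p. int p ^ multiplicity p m"
  have "(\<Prod>p\<in>prime_factors m. ?d p) = int (\<Prod>p\<in>prime_factors m. p ^ multiplicity p m)"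
    by simp
  also have "\<dots> = int m"
    using prod_prime_factors[of m] assms(1) by simp
  finally have prod_eq: "(\<Prod>p\<in>prime_factors m. ?d p) = int m" .
  have "pairwise (\<lambda>p q. coprime (?d p) (?d q)) (prime_factors m)"
    unfolding pairwise_def by (auto intro: primes_coprime)
  moreover have "\<exists>v. [Qf G n v = a] (mod ?d p)" if "p \<in> prime_factors m" for p
    using that by (auto intro: in_QLp_imp_cong_prime_power assms(2))
  ultimately have "\<exists>v. [Qf G n v = a] (mod \<Prod>p\<in>prime_factors m. ?d p)"
    by (intro Qf_cong_prod_coprime) auto
  then show ?thesis
    unfolding prod_eq .
qed

lemma pos_def_lattice_Qf_nonneg:
  assumes "pos_def_lattice G n"
  shows "Qf G n x \<ge> 0"
proof (cases "\<exists>i<n. x i \<noteq> 0")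
  case True
  then show ?thesis
    using assms unfolding pos_def_lattice_def by (simp add: order_less_imp_le)
next
  case False
  then show ?thesis
    unfolding Qf_def Bf_def by simp
qed

lemma cong_nonneg_in_AP:
  fixes q :: int
  assumes "a < m" and "q \<ge> 0" and "[q = int a] (mod int m)"
  shows "nat q \<in> AP a m"
proof -
  have "q mod int m = int a"
    using assms unfolding cong_def by simp
  then have "q = int a + int m * (q div int m)"
    by (metis add.commute div_mult_mod_eq mult.commute)
  moreover have "q div int m \<ge> 0"
    using assms(1,2) by (simp add: pos_imp_zdiv_nonneg_iff)
  ultimately have "q = int (a + m * nat (q div int m))"
    by simp
  then show ?thesis
    unfolding AP_def by (metis (mono_tags, lifting) mem_Collect_eq nat_int)
qed

theorem lemma2:
  fixes G :: "nat \<Rightarrow> nat \<Rightarrow> int" and n a m :: nat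
  assumes "symmetric_gram G n"
    and "pos_def_lattice G n"
    and "lattice_scale G n = UNIV"
    and "n \<ge> 4"
    and "admissible a m"
    and "AP a m \<subseteq> EL G n"
  shows "\<exists>p. prime p \<and> p dvd m \<and> \<not> in_QLp G n p (int a)"
proof (rule ccontr)
  assume "\<not> ?thesis"
  moreover have "a < m"
    using assms(5) unfolding admissible_def by simp
  ultimately obtain v where v: "[Qf G n v = int a] (mod int m)"
    using in_QLp_imp_cong[where m = m and G = G and n = n and a = "int a"] by auto
  have "nat (Qf G n v) \<in> AP a m"
    using cong_nonneg_in_AP[OF \<open>a < m\<close> pos_def_lattice_Qf_nonneg[OF assms(2)] v] .
  then have "Qf G n v \<notin> QL G n"
    using assms(6) pos_def_lattice_Qf_nonneg[OF assms(2)] unfolding EL_def by auto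
  then show False
    unfolding QL_def by blast
qed

end
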